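(* For integers $s\ge t\ge 2$, $${\rm dim}_s(K_{1,s}\diamond K_{1,t})=\begin{cases} st+s-1 & \text{if } t=2,\\ st+s & \text{if } t>2.\end{cases}$$
   Context: The modular product $G\diamond H$ has vertex set $V(G)\times V(H)$; distinct vertices $(g,h)$ and $(g',h')$ are adjacent iff ($g=g'$ and $hh'\in E(H)$), or ($gg'\in E(G)$ and $h=h'$), or ($gg'\in E(G)$ and $hh'\in E(H)$), or ($g\neq g'$, $h\neq h'$, $gg'\notin E(G)$ and $hh'\notin E(H)$). For a connected graph $X$, a vertex $z$ strongly resolves distinct vertices $x,y$ if $d_X(y,z)=d_X(y,x)+d_X(x,z)$ or $d_X(x,z)=d_X(x,y)+d_X(y,z)$; a strong metric generator is a set $S\subseteq V(X)$ such that every pair of distinct vertices is strongly resolved by some vertex of $S$; ${\rm dim}_s(X)$, the strong metric dimension, is the minimum cardinality of a strong metric generator. $K_{1,s}$ is the star with $s$ leaves. *)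

theory Defs
  imports Main
begin

text \<open>Simple graphs are given by a vertex set V and a symmetric irreflexive adjacency
relation E (only its restriction to V matters).\<close>

definition is_walk :: "'a set \<Rightarrow> ('a \<Rightarrow> 'a \<Rightarrow> bool) \<Rightarrow> 'a list \<Rightarrow> bool" where
  "is_walk V E xs \<longleftrightarrow> xs \<noteq> [] \<and> set xs \<subseteq> V \<and>
     (\<forall>i. Suc i < length xs \<longrightarrow> E (xs ! i) (xs ! Suc i))"

text \<open>Graph distance: the least number of edges of a walk from x to y
 (meaningful for connected graphs).\<close>
definition gdist :: "'a set \<Rightarrow> ('a \<Rightarrow> 'a \<Rightarrow> bool) \<Rightarrow> 'a \<Rightarrow> 'a \<Rightarrow> nat" where
  "gdist V E x y = (LEAST n. \<exists>xs. is_walk V E xs \<and> hd xs = x \<and> last xs = y \<and> length xs = Suc n)"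

definition strongly_resolves :: "'a set \<Rightarrow> ('a \<Rightarrow> 'a \<Rightarrow> bool) \<Rightarrow> 'a \<Rightarrow> 'a \<Rightarrow> 'a \<Rightarrow> bool" where
  "strongly_resolves V E z x y \<longleftrightarrow>
     gdist V E y z = gdist V E y x + gdist V E x z \<or>
     gdist V E x z = gdist V E x y + gdist V E y z"

definition strong_metric_generator :: "'a set \<Rightarrow> ('a \<Rightarrow> 'a \<Rightarrow> bool) \<Rightarrow> 'a set \<Rightarrow> bool" where
  "strong_metric_generator V E S \<longleftrightarrow> S \<subseteq> V \<and>
     (\<forall>x\<in>V. \<forall>y\<in>V. x \<noteq> y \<longrightarrow> (\<exists>z\<in>S. strongly_resolves V E z x y))"

definition strong_metric_dim :: "'a set \<Rightarrow> ('a \<Rightarrow> 'a \<Rightarrow> bool) \<Rightarrow> nat" where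
  "strong_metric_dim V E = (LEAST k. \<exists>S. strong_metric_generator V E S \<and> card S = k)"

definition modprod_adj :: "('a \<Rightarrow> 'a \<Rightarrow> bool) \<Rightarrow> ('b \<Rightarrow> 'b \<Rightarrow> bool) \<Rightarrow> 'a \<times> 'b \<Rightarrow> 'a \<times> 'b \<Rightarrow> bool" where
  "modprod_adj EG EH p q \<longleftrightarrow> (case p of (g, h) \<Rightarrow> case q of (g', h') \<Rightarrow>
     (g, h) \<noteq> (g', h') \<and>
     ((g = g' \<and> EH h h') \<or> (EG g g' \<and> h = h') \<or> (EG g g' \<and> EH h h') \<or>
      (g \<noteq> g' \<and> h \<noteq> h' \<and> \<not> EG g g' \<and> \<not> EH h h')))"

definition star_V :: "nat \<Rightarrow> nat set" where
  "star_V s = {0..s}"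

definition star_E :: "nat \<Rightarrow> nat \<Rightarrow> bool" where
  "star_E u v \<longleftrightarrow> (u = 0 \<and> v \<noteq> 0) \<or> (u \<noteq> 0 \<and> v = 0)"

end

theory Submission
  imports Defs
begin

text \<open>The centre (0,0) of K_{1,s} \<diamond> K_{1,t} is adjacent to every other vertex, so the
graph has diameter two. In such a graph a vertex z outside {x,y} strongly resolves x and y
exactly when x, y are adjacent and z is adjacent to precisely one of them. Hence S is a strong
metric generator iff its complement is a clique whose vertices are pairwise separated by
S-neighbourhoods, and the dimension is (s+1)(t+1) minus the largest such clique. Cliques of
the product have at most max (t+1) 4 vertices: a clique containing a vertex with exactly one
zero coordinate sees each zero-pattern only once, and otherwise its vertices have distinct
second coordinates. The bound is attained by the diagonal {(i,i) | i \<le> t} for t \<ge> 3,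
separated by the vertices (0,j), and by {0,1}\<times>{0,1} for t = 2.\<close>

lemma is_walk_singleton: "is_walk V E [x] \<longleftrightarrow> x \<in> V"
  by (simp add: is_walk_def)

lemma is_walk_pair: "is_walk V E [x, y] \<longleftrightarrow> x \<in> V \<and> y \<in> V \<and> E x y"
  by (auto simp: is_walk_def less_Suc_eq)

lemma is_walk_triple: "\<lbrakk>x \<in> V; w \<in> V; y \<in> V; E x w; E w y\<rbrakk> \<Longrightarrow> is_walk V E [x, w, y]"
  by (auto simp: is_walk_def less_Suc_eq)

lemma gdist_le_walk:
  "\<lbrakk>is_walk V E xs; hd xs = x; last xs = y\<rbrakk> \<Longrightarrow> gdist V E x y \<le> length xs - 1"
  unfolding gdist_def by (rule Least_le) (auto simp: is_walk_def intro!: exI[of _ xs])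

lemma gdist_shortest_walk:
  assumes "is_walk V E xs" "hd xs = x" "last xs = y"
  obtains ys where "is_walk V E ys" "hd ys = x" "last ys = y" "length ys = Suc (gdist V E x y)"
proof -
  have "\<exists>ys. is_walk V E ys \<and> hd ys = x \<and> last ys = y \<and> length ys = Suc (gdist V E x y)"
    unfolding gdist_def
    by (rule LeastI_ex, rule exI[of _ "length xs - 1"], rule exI[of _ xs])
      (use assms in \<open>auto simp: is_walk_def\<close>)
  then show ?thesis using that by blast
qed

lemma gdist_self: "x \<in> V \<Longrightarrow> gdist V E x x = 0"
  using gdist_le_walk[of V E "[x]"] by (simp add: is_walk_singleton)

lemma gdist_eq_0D:
  "\<lbrakk>is_walk V E xs; hd xs = x; last xs = y; gdist V E x y = 0\<rbrakk> \<Longrightarrow> x = y"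
  by (erule gdist_shortest_walk) (auto simp: length_Suc_conv)

lemma gdist_eq_1D:
  "\<lbrakk>is_walk V E xs; hd xs = x; last xs = y; gdist V E x y = 1\<rbrakk> \<Longrightarrow> E x y"
  by (erule gdist_shortest_walk) (auto simp: length_Suc_conv is_walk_pair)

definition is_clique :: "('a \<Rightarrow> 'a \<Rightarrow> bool) \<Rightarrow> 'a set \<Rightarrow> bool" where
  "is_clique E K \<longleftrightarrow> (\<forall>x\<in>K. \<forall>y\<in>K. x \<noteq> y \<longrightarrow> E x y)"

lemma strong_metric_dim_eqI:
  assumes "strong_metric_generator V E S" "card S = k"
    and "\<And>S'. strong_metric_generator V E S' \<Longrightarrow> k \<le> card S'"
  shows "strong_metric_dim V E = k"
  unfolding strong_metric_dim_def by (rule Least_equality) (use assms in auto)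

locale diameter_two_graph =
  fixes V :: "'a set" and E :: "'a \<Rightarrow> 'a \<Rightarrow> bool"
  assumes adj_sym: "E x y \<longleftrightarrow> E y x"
    and common_neighbour: "\<lbrakk>x \<in> V; y \<in> V; x \<noteq> y; \<not> E x y\<rbrakk> \<Longrightarrow> \<exists>w\<in>V. E x w \<and> E w y"
begin

lemma gdist_eq:
  assumes "x \<in> V" "y \<in> V"
  shows "gdist V E x y = (if x = y then 0 else if E x y then 1 else 2)"
proof (cases "x = y")
  case True
  then show ?thesis using gdist_self assms by simp
next
  case False
  show ?thesis
  proof (cases "E x y")
    case True
    then show ?thesis
      using gdist_le_walk[of V E "[x, y]"] gdist_eq_0D[of V E "[x, y]"] False assms
      by (fastforce simp: is_walk_pair)
  next
    case nonadj: False
    then obtain w where w: "w \<in> V" "E x w" "E w y"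
      using common_neighbour assms False by blast
    then have walk: "is_walk V E [x, w, y]" using assms by (simp add: is_walk_triple)
    have "gdist V E x y \<le> 2" using gdist_le_walk[OF walk, of x y] by simp
    moreover have "gdist V E x y \<noteq> 0" "gdist V E x y \<noteq> 1"
      using gdist_eq_0D[OF walk, of x y] gdist_eq_1D[OF walk, of x y] False nonadj by auto
    ultimately show ?thesis using False nonadj by simp
  qed
qed

lemma strongly_resolves_iff:
  assumes "x \<in> V" "y \<in> V" "z \<in> V" "x \<noteq> y"
  shows "strongly_resolves V E z x y \<longleftrightarrow> z = x \<or> z = y \<or> (E x y \<and> (E z x \<longleftrightarrow> \<not> E z y))"
  unfolding strongly_resolves_def
  using gdist_eq[OF assms(1,2)] gdist_eq[OF assms(2,1)] gdist_eq[OF assms(1,3)]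
    gdist_eq[OF assms(2,3)] gdist_eq[OF assms(3,1)] gdist_eq[OF assms(3,2)]
    gdist_self[OF assms(1)] gdist_self[OF assms(2)] assms(4) adj_sym[of x y]
    adj_sym[of x z] adj_sym[of y z]
  by (auto split: if_splits)

lemma strong_metric_generator_iff:
  "strong_metric_generator V E S \<longleftrightarrow> S \<subseteq> V \<and> is_clique E (V - S) \<and>
     (\<forall>x\<in>V - S. \<forall>y\<in>V - S. x \<noteq> y \<longrightarrow> (\<exists>z\<in>S. E z x \<longleftrightarrow> \<not> E z y))"
proof -
  have resolved: "(\<exists>z\<in>S. strongly_resolves V E z x y) \<longleftrightarrow>
        x \<in> S \<or> y \<in> S \<or> (E x y \<and> (\<exists>z\<in>S. E z x \<longleftrightarrow> \<not> E z y))"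
    if S: "S \<subseteq> V" and xy: "x \<in> V" "y \<in> V" "x \<noteq> y" for x y
  proof
    assume "\<exists>z\<in>S. strongly_resolves V E z x y"
    then obtain z where "z \<in> S" "strongly_resolves V E z x y" by blast
    then show "x \<in> S \<or> y \<in> S \<or> (E x y \<and> (\<exists>z\<in>S. E z x \<longleftrightarrow> \<not> E z y))"
      using strongly_resolves_iff[OF xy(1,2) _ xy(3), of z] S by blast
  next
    assume "x \<in> S \<or> y \<in> S \<or> (E x y \<and> (\<exists>z\<in>S. E z x \<longleftrightarrow> \<not> E z y))"
    then show "\<exists>z\<in>S. strongly_resolves V E z x y"
      using strongly_resolves_iff[OF xy(1,2) _ xy(3)] S by blast
  qed
  show ?thesis
  proof (cases "S \<subseteq> V")
    case True
    show ?thesis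
      unfolding strong_metric_generator_def is_clique_def
      using resolved[OF True] True by (simp add: Ball_def) blast
  qed (simp add: strong_metric_generator_def)
qed

lemma card_strong_metric_generator_ge:
  assumes "finite V" "\<And>K. \<lbrakk>K \<subseteq> V; is_clique E K\<rbrakk> \<Longrightarrow> card K \<le> m"
    and "strong_metric_generator V E S"
  shows "card V - m \<le> card S"
proof -
  have S: "S \<subseteq> V" "is_clique E (V - S)"
    using assms(3) strong_metric_generator_iff by auto
  then have "card (V - S) \<le> m" using assms(2) by blast
  moreover have "card (V - S) = card V - card S"
    using S(1) assms(1) by (meson card_Diff_subset finite_subset)
  ultimately show ?thesis by linarith
qed

end

abbreviation star_modprod_V :: "nat \<Rightarrow> nat \<Rightarrow> (nat \<times> nat) set" where
  "star_modprod_V s t \<equiv> star_V s \<times> star_V t"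

abbreviation star_modprod_E :: "nat \<times> nat \<Rightarrow> nat \<times> nat \<Rightarrow> bool" where
  "star_modprod_E \<equiv> modprod_adj star_E star_E"

lemma star_modprod_E_iff:
  "star_modprod_E (a, b) (c, d) \<longleftrightarrow>
     (a = 0 \<and> b = 0 \<and> (c, d) \<noteq> (0, 0)) \<or> (c = 0 \<and> d = 0 \<and> (a, b) \<noteq> (0, 0)) \<or>
     (a = 0 \<and> b \<noteq> 0 \<and> c \<noteq> 0 \<and> d = 0) \<or> (a \<noteq> 0 \<and> b = 0 \<and> c = 0 \<and> d \<noteq> 0) \<or>
     (a = 0 \<and> c \<noteq> 0 \<and> b \<noteq> 0 \<and> b = d) \<or> (c = 0 \<and> a \<noteq> 0 \<and> d \<noteq> 0 \<and> b = d) \<or>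
     (b = 0 \<and> a \<noteq> 0 \<and> d \<noteq> 0 \<and> a = c) \<or> (d = 0 \<and> c \<noteq> 0 \<and> b \<noteq> 0 \<and> a = c) \<or>
     (a \<noteq> 0 \<and> b \<noteq> 0 \<and> c \<noteq> 0 \<and> d \<noteq> 0 \<and> a \<noteq> c \<and> b \<noteq> d)"
  unfolding modprod_adj_def star_E_def by auto

lemma star_modprod_E_centre: "z \<noteq> (0, 0) \<Longrightarrow> star_modprod_E (0, 0) z \<and> star_modprod_E z (0, 0)"
  by (cases z) (auto simp: star_modprod_E_iff)

interpretation star_modprod: diameter_two_graph "star_modprod_V s t" star_modprod_E
proof
  fix x y :: "nat \<times> nat"
  show "star_modprod_E x y \<longleftrightarrow> star_modprod_E y x"
    by (cases x; cases y) (auto simp: star_modprod_E_iff)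
  assume "x \<noteq> y" "\<not> star_modprod_E x y"
  then have "x \<noteq> (0, 0)" "y \<noteq> (0, 0)" using star_modprod_E_centre by metis+
  moreover have "(0, 0) \<in> star_modprod_V s t" by (simp add: star_V_def)
  ultimately show "\<exists>w\<in>star_modprod_V s t. star_modprod_E x w \<and> star_modprod_E w y"
    using star_modprod_E_centre by blast
qed

lemma card_star_modprod_V: "card (star_modprod_V s t) = (s + 1) * (t + 1)"
  by (simp add: star_V_def card_cartesian_product)

lemma card_star_modprod_clique_le:
  assumes "K \<subseteq> star_modprod_V s t" "is_clique star_modprod_E K"
  shows "card K \<le> max (t + 1) 4"
proof (cases "\<exists>a b. (a, b) \<in> K \<and> (a = 0 \<and> b \<noteq> 0 \<or> a \<noteq> 0 \<and> b = 0)")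
  case True
  then obtain a0 b0 where w: "(a0, b0) \<in> K" "a0 = 0 \<and> b0 \<noteq> 0 \<or> a0 \<noteq> 0 \<and> b0 = 0" by blast
  define zero_pattern :: "nat \<times> nat \<Rightarrow> bool \<times> bool" where
    "zero_pattern = (\<lambda>(a, b). (a = 0, b = 0))"
  have "inj_on zero_pattern K"
  proof (rule inj_onI, rule ccontr)
    fix x y assume xy: "x \<in> K" "y \<in> K" "zero_pattern x = zero_pattern y" "x \<noteq> y"
    obtain a b c d where ab: "x = (a, b)" "y = (c, d)" by (cases x; cases y)
    have "star_modprod_E (a, b) (c, d)"
      using assms(2) xy ab unfolding is_clique_def by blast
    moreover have "(a = 0 \<longleftrightarrow> c = 0) \<and> (b = 0 \<longleftrightarrow> d = 0)"
      using xy(3) ab unfolding zero_pattern_def by simp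
    moreover have "(a0, b0) = (a, b) \<or> star_modprod_E (a0, b0) (a, b)"
      "(a0, b0) = (c, d) \<or> star_modprod_E (a0, b0) (c, d)"
      using assms(2) xy w ab unfolding is_clique_def by auto
    ultimately show False using w xy(4) ab by (auto simp: star_modprod_E_iff)
  qed
  then have "card K = card (zero_pattern ` K)" by (simp add: card_image)
  also have "\<dots> \<le> card (UNIV :: (bool \<times> bool) set)" by (rule card_mono) auto
  also have "\<dots> = 4"
    by (simp add: card_UNIV_bool card_cartesian_product flip: UNIV_Times_UNIV del: UNIV_Times_UNIV)
  finally show ?thesis by simp
next
  case False
  have "inj_on snd K"
  proof (rule inj_onI, rule ccontr)
    fix x y assume xy: "x \<in> K" "y \<in> K" "snd x = snd y" "x \<noteq> y"
    obtain a b c d where ab: "x = (a, b)" "y = (c, d)" by (cases x; cases y)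
    have "star_modprod_E (a, b) (c, d)"
      using assms(2) xy ab unfolding is_clique_def by blast
    then show False using False xy ab by (auto simp: star_modprod_E_iff)
  qed
  then have "card K = card (snd ` K)" by (simp add: card_image)
  also have "\<dots> \<le> card {0..t}" using assms(1) by (intro card_mono) (auto simp: star_V_def)
  finally show ?thesis by simp
qed

lemma card_star_modprod_generator_ge:
  "strong_metric_generator (star_modprod_V s t) star_modprod_E S \<Longrightarrow>
     (s + 1) * (t + 1) - max (t + 1) 4 \<le> card S"
  using star_modprod.card_strong_metric_generator_ge[of s t "max (t + 1) 4" S]
    card_star_modprod_clique_le card_star_modprod_V
  by (simp add: star_V_def)

lemma star_modprod_generator_complement:
  assumes "W \<subseteq> star_modprod_V s t" "is_clique star_modprod_E W"
    and "\<And>x y. \<lbrakk>x \<in> W; y \<in> W; x \<noteq> y\<rbrakk> \<Longrightarrow>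
           \<exists>z\<in>star_modprod_V s t - W. star_modprod_E z x \<longleftrightarrow> \<not> star_modprod_E z y"
  shows "strong_metric_generator (star_modprod_V s t) star_modprod_E (star_modprod_V s t - W)"
    "card (star_modprod_V s t - W) = (s + 1) * (t + 1) - card W"
proof -
  have "star_modprod_V s t - (star_modprod_V s t - W) = W" using assms(1) by blast
  then show "strong_metric_generator (star_modprod_V s t) star_modprod_E (star_modprod_V s t - W)"
    using assms by (simp add: star_modprod.strong_metric_generator_iff)
  show "card (star_modprod_V s t - W) = (s + 1) * (t + 1) - card W"
    using assms(1) card_star_modprod_V
    by (metis card_Diff_subset finite_SigmaI finite_atLeastAtMost finite_subset star_V_def)
qed

lemma star_modprod_generator_t2:
  assumes "2 \<le> s"
  obtains S where "strong_metric_generator (star_modprod_V s 2) star_modprod_E S"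
    "card S = s * 2 + s - 1"
proof -
  define W where "W = {(0::nat, 0::nat), (0, 1), (1, 0), (1, 1)}"
  have W: "W \<subseteq> star_modprod_V s 2" using assms unfolding W_def star_V_def by auto
  have "{(0, 2), (2, 0), (2, 1)} \<subseteq> star_modprod_V s 2 - W"
    using assms unfolding W_def star_V_def by auto
  moreover have "\<forall>x\<in>W. \<forall>y\<in>W. x \<noteq> y \<longrightarrow>
      (\<exists>z\<in>{(0, 2), (2, 0), (2, 1)}. star_modprod_E z x \<longleftrightarrow> \<not> star_modprod_E z y)"
    unfolding W_def by (simp add: star_modprod_E_iff)
  ultimately have "\<exists>z\<in>star_modprod_V s 2 - W. star_modprod_E z x \<longleftrightarrow> \<not> star_modprod_E z y"
    if "x \<in> W" "y \<in> W" "x \<noteq> y" for x y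
    using that by blast
  moreover have "is_clique star_modprod_E W"
    unfolding W_def is_clique_def by (simp add: star_modprod_E_iff)
  moreover have "card W = 4" unfolding W_def by simp
  ultimately show ?thesis using that star_modprod_generator_complement[OF W] by simp
qed

lemma star_modprod_generator_t3:
  assumes "3 \<le> t" "t \<le> s"
  obtains S where "strong_metric_generator (star_modprod_V s t) star_modprod_E S"
    "card S = s * t + s"
proof -
  define W where "W = insert (0::nat, 0::nat) ((\<lambda>i. (i, i)) ` {1..t})"
  have W: "W \<subseteq> star_modprod_V s t" using assms unfolding W_def star_V_def by auto
  have outside: "(0, j) \<in> star_modprod_V s t - W" if "1 \<le> j" "j \<le> t" for j
    using that unfolding W_def star_V_def by auto
  have "\<exists>z\<in>star_modprod_V s t - W. star_modprod_E z x \<longleftrightarrow> \<not> star_modprod_E z y"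
    if xy: "x \<in> W" "y \<in> W" "x \<noteq> y" for x y
  proof -
    have sep: "star_modprod_E (0, j) (i, i) \<longleftrightarrow> i = j" "star_modprod_E (0, j) (0, 0)"
      if "1 \<le> i" "1 \<le> j" for i j
      using that by (auto simp: star_modprod_E_iff)
    show ?thesis
    proof (cases "x = (0, 0) \<or> y = (0, 0)")
      case True
      then obtain i where i: "1 \<le> i" "i \<le> t" "x = (0, 0) \<and> y = (i, i) \<or> x = (i, i) \<and> y = (0, 0)"
        using xy unfolding W_def by auto
      define j where "j = (if i = 1 then 2 else 1 :: nat)"
      have "1 \<le> j" "j \<le> t" "j \<noteq> i" using assms unfolding j_def by auto
      then show ?thesis
        using i sep[of i j] outside[of j] by (intro bexI[of _ "(0, j)"]) auto
    next
      case False
      then obtain i k where "x = (i, i)" "y = (k, k)" "1 \<le> i" "i \<le> t" "1 \<le> k"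
        using xy unfolding W_def by fastforce
      then show ?thesis
        using xy(3) sep[of i i] sep[of k i] outside[of i] by (intro bexI[of _ "(0, i)"]) auto
    qed
  qed
  moreover have "is_clique star_modprod_E W"
    unfolding W_def is_clique_def by (auto simp: star_modprod_E_iff)
  moreover have "card W = t + 1"
    unfolding W_def by (subst card_insert_disjoint) (auto simp: card_image inj_on_def)
  ultimately show ?thesis
    using that star_modprod_generator_complement[OF W] by (simp add: algebra_simps)
qed

theorem mainTheorem8:
  fixes s t :: nat
  assumes "2 \<le> t" and "t \<le> s"
  shows "strong_metric_dim (star_V s \<times> star_V t) (modprod_adj star_E star_E) =
           (if t = 2 then s * t + s - 1 else s * t + s)"
proof -
  obtain S where S: "strong_metric_generator (star_modprod_V s t) star_modprod_E S"
    "card S = (if t = 2 then s * t + s - 1 else s * t + s)"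
  proof (cases "t = 2")
    case True
    then show ?thesis using that star_modprod_generator_t2 assms by auto
  next
    case False
    then have "3 \<le> t" using assms by simp
    then show ?thesis using that star_modprod_generator_t3 assms(2) False by (metis (full_types))
  qed
  have "(s + 1) * (t + 1) - max (t + 1) 4 = (if t = 2 then s * t + s - 1 else s * t + s)"
    using assms by (auto simp: max_def algebra_simps)
  then show ?thesis
    using S card_star_modprod_generator_ge[of s t] by (intro strong_metric_dim_eqI) auto
qed

end
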